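(* Let $E_\alpha(x)=\sum_{k=0}^\infty \frac{x^k}{\Gamma(\alpha k+1)}$ be the Mittag-Leffler function. For $0<\alpha<1$, the function $x\mapsto E_\alpha(x)$ is log-convex on $\mathbb R$. For $\alpha>1$, it is log-concave on $(0,\infty)$. *)

theory Defs
  imports "HOL-Analysis.Analysis"
begin

definition mittag_leffler :: "real \<Rightarrow> real \<Rightarrow> real" where
  "mittag_leffler \<alpha> x = (\<Sum>k. x ^ k / Gamma (\<alpha> * real k + 1))"

definition log_convex_on :: "real set \<Rightarrow> (real \<Rightarrow> real) \<Rightarrow> bool" where
  "log_convex_on S f \<longleftrightarrow> (\<forall>x\<in>S. f x > 0) \<and> convex_on S (\<lambda>x. ln (f x))"

definition log_concave_on :: "real set \<Rightarrow> (real \<Rightarrow> real) \<Rightarrow> bool" where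
  "log_concave_on S f \<longleftrightarrow> (\<forall>x\<in>S. f x > 0) \<and> concave_on S (\<lambda>x. ln (f x))"

end

theory Submission
  imports Defs
begin

text \<open>
  For \<open>\<alpha> > 1\<close> write \<open>E\<^sub>\<alpha> = \<Sum> c\<^sub>k x\<^sup>k\<close> with \<open>c\<^sub>k = 1/\<Gamma>(\<alpha>k + 1)\<close>. The \<open>m\<close>-th coefficient of
  \<open>x\<^sup>2 (E E'' - E'\<^sup>2)\<close> is \<open>\<Sum>\<^sub>i c\<^sub>i c\<^sub>m\<^sub>-\<^sub>i ((m - 2i)\<^sup>2 - m) / 2\<close>. Since
  \<open>\<phi>(t) = ln \<Gamma>(t + 1) - ln \<Gamma>(\<alpha>t + 1)\<close> is concave, \<open>c\<^sub>i c\<^sub>m\<^sub>-\<^sub>i m! / binom m i\<close> decreases in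
  \<open>\<bar>m - 2i\<bar>\<close>, so Chebyshev's sum inequality against the binomial weights, for which
  \<open>(m - 2i)\<^sup>2 - m\<close> has mean zero, makes every coefficient nonpositive.

  For \<open>\<alpha> < 1\<close> write \<open>E\<^sub>\<alpha> = \<Sum> b\<^sub>k x\<^sup>k / k!\<close> with \<open>b\<^sub>k = k!/\<Gamma>(\<alpha>k + 1)\<close>. For rational
  \<open>\<alpha> = p/q\<close> Gauss's multiplication formula writes \<open>b\<^sub>k\<close> as \<open>K C\<^sup>k\<close> times a product of Gamma
  and Beta integrals \<open>\<integral> t\<^sup>k\<^sup>/\<^sup>q w(t) dt\<close>, i.e. of moment sequences. Hence all Hankel forms
  \<open>\<Sum> v\<^sub>i v\<^sub>j (l\<^sup>2 b\<^sub>i\<^sub>+\<^sub>j + 2lm b\<^sub>i\<^sub>+\<^sub>j\<^sub>+\<^sub>1 + m\<^sup>2 b\<^sub>i\<^sub>+\<^sub>j\<^sub>+\<^sub>2)\<close> are nonnegative; taking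
  \<open>v\<^sub>i = y\<^sup>i / i!\<close> they converge to \<open>l\<^sup>2 E + 2lm E' + m\<^sup>2 E''\<close> at \<open>2y\<close>, which gives
  \<open>E'\<^sup>2 \<le> E E''\<close>. Irrational \<open>\<alpha>\<close> follow by continuity of \<open>E\<^sub>\<alpha>(x)\<close> in \<open>\<alpha>\<close>.
\<close>

section \<open>The Mittag-Leffler power series\<close>

definition ml_coeff :: "real \<Rightarrow> nat \<Rightarrow> real" where
  "ml_coeff \<alpha> k = inverse (Gamma (\<alpha> * real k + 1))"

lemma ml_coeff_pos: "\<alpha> \<ge> 0 \<Longrightarrow> ml_coeff \<alpha> k > 0"
  unfolding ml_coeff_def by (simp add: add_nonneg_pos)

lemma ml_coeff_0 [simp]: "ml_coeff \<alpha> 0 = 1"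
  by (simp add: ml_coeff_def)

lemma mittag_leffler_powser: "mittag_leffler \<alpha> x = (\<Sum>k. ml_coeff \<alpha> k * x ^ k)"
  unfolding mittag_leffler_def ml_coeff_def by (simp add: divide_inverse mult.commute)

lemma Gamma_plus_one_ge_fact_floor: "\<exists>c>0. \<forall>y::real\<ge>0. c * fact (nat \<lfloor>y\<rfloor>) \<le> Gamma (y + 1)"
proof -
  have "continuous_on {1..2::real} Gamma"
    by (rule continuous_on_Gamma) (auto elim!: nonpos_Ints_cases)
  then obtain x0 :: real where x0: "x0 \<in> {1..2}" "\<And>y. y \<in> {1..2} \<Longrightarrow> Gamma x0 \<le> Gamma y"
    using continuous_attains_inf[of "{1..2::real}" Gamma] by auto
  have "Gamma x0 * fact (nat \<lfloor>y\<rfloor>) \<le> Gamma (y + 1)" if "y \<ge> 0" for y :: real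
  proof -
    define n where "n = nat \<lfloor>y\<rfloor>"
    define \<theta> where "\<theta> = y - real n"
    have \<theta>: "0 \<le> \<theta>" "\<theta> < 1" using that unfolding \<theta>_def n_def by linarith+
    have "Gamma (y + 1) = Gamma (\<theta> + 1 + real n)" by (simp add: \<theta>_def)
    also have "\<dots> = pochhammer (\<theta> + 1) n * Gamma (\<theta> + 1)"
    proof -
      have "\<theta> + 1 \<notin> \<int>\<^sub>\<le>\<^sub>0" using \<theta> by (auto elim!: nonpos_Ints_cases)
      moreover have "Gamma (\<theta> + 1) > 0" using \<theta> by simp
      ultimately show ?thesis by (simp add: pochhammer_Gamma)
    qed
    finally have Gamma_y: "Gamma (y + 1) = pochhammer (\<theta> + 1) n * Gamma (\<theta> + 1)" .
    have "fact n = pochhammer (1::real) n" by (simp add: pochhammer_fact)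
    also have "\<dots> \<le> pochhammer (\<theta> + 1) n"
      unfolding pochhammer_prod by (rule prod_mono) (use \<theta> in auto)
    finally have fact_le: "fact n \<le> pochhammer (\<theta> + 1) n" .
    have "Gamma x0 \<le> Gamma (\<theta> + 1)" using x0(2)[of "\<theta> + 1"] \<theta> by simp
    then have "Gamma x0 * fact n \<le> Gamma (\<theta> + 1) * pochhammer (\<theta> + 1) n"
      by (rule mult_mono[OF _ fact_le]) (use \<theta> in auto)
    then show ?thesis unfolding Gamma_y n_def[symmetric] by (simp add: mult.commute)
  qed
  moreover have "Gamma x0 > 0" using x0(1) by simp
  ultimately show ?thesis by blast
qed

lemma power_div_fact_bounded: "\<exists>D>0. \<forall>n. (Q::real) ^ n / fact n \<le> D"
proof -
  have "(\<lambda>n. Q ^ n / fact n) \<longlonglongrightarrow> 0"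
    using summable_LIMSEQ_zero[OF summable_exp[of Q]] by (simp add: divide_inverse mult.commute)
  then have "Bseq (\<lambda>n. Q ^ n / fact n)" by (rule convergent_imp_Bseq[OF convergentI])
  then obtain D where "D > 0" "\<And>n. norm (Q ^ n / fact n) \<le> D" by (auto simp: Bseq_def)
  then show ?thesis by (metis abs_ge_self order_trans real_norm_def)
qed

text \<open>Since \<open>\<Gamma>(\<alpha>k + 1) \<ge> c \<lfloor>\<alpha>k\<rfloor>!\<close> and \<open>\<lfloor>\<alpha>k\<rfloor> \<ge> \<alpha>\<^sub>0 k - 1\<close>, the factorial absorbs
  \<open>(2 max 1 \<bar>x\<bar>)\<^sup>k\<close> uniformly in \<open>\<alpha> \<ge> \<alpha>\<^sub>0\<close>.\<close>
lemma ml_term_geometric_bound: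
  assumes "\<alpha>\<^sub>0 > 0"
  shows "\<exists>B. \<forall>\<alpha>\<ge>\<alpha>\<^sub>0. \<forall>k. \<bar>x\<bar> ^ k / Gamma (\<alpha> * real k + 1) \<le> B * (1/2) ^ k"
proof -
  obtain c :: real where c: "c > 0" "\<And>y. y \<ge> 0 \<Longrightarrow> c * fact (nat \<lfloor>y\<rfloor>) \<le> Gamma (y + 1)"
    using Gamma_plus_one_ge_fact_floor by blast
  define R where "R = max 1 \<bar>x\<bar>"
  define Q where "Q = (2 * R) powr (1 / \<alpha>\<^sub>0)"
  have Q: "Q \<ge> 1" unfolding Q_def R_def using assms by (intro ge_one_powr_ge_zero) auto
  obtain D where D: "D > 0" "\<And>n. Q ^ n / fact n \<le> D" using power_div_fact_bounded by blast
  have "\<bar>x\<bar> ^ k / Gamma (\<alpha> * real k + 1) \<le> (Q * D / c) * (1/2) ^ k" if "\<alpha> \<ge> \<alpha>\<^sub>0" for \<alpha> k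
  proof -
    define n where "n = nat \<lfloor>\<alpha> * real k\<rfloor>"
    have \<alpha>k: "\<alpha> * real k \<ge> 0" using that assms by simp
    have "\<alpha>\<^sub>0 * real k \<le> \<alpha> * real k" using that by (simp add: mult_right_mono)
    then have n: "\<alpha>\<^sub>0 * real k \<le> real (Suc n)" unfolding n_def using \<alpha>k by linarith
    have "(2 * R) ^ k = Q powr (\<alpha>\<^sub>0 * real k)"
      unfolding Q_def powr_powr using assms by (simp add: R_def powr_realpow)
    also have "\<dots> \<le> Q powr real (Suc n)" by (rule powr_mono[OF n Q])
    also have "\<dots> = Q ^ Suc n" by (rule powr_realpow) (use Q in simp)
    also have "\<dots> = Q * Q ^ n" by simp
    also have "\<dots> \<le> Q * (D * fact n)" using D(2)[of n] Q by (simp add: divide_le_eq)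
    also have "\<dots> \<le> Q * D / c * Gamma (\<alpha> * real k + 1)"
      using c(2)[OF \<alpha>k] c(1) Q D(1) unfolding n_def by (simp add: field_simps)
    finally have "(2 * R) ^ k \<le> Q * D / c * Gamma (\<alpha> * real k + 1)" .
    moreover have "\<bar>x\<bar> ^ k * 2 ^ k \<le> (2 * R) ^ k"
      unfolding power_mult_distrib by (simp add: R_def power_mono)
    ultimately have "\<bar>x\<bar> ^ k * 2 ^ k \<le> Q * D / c * Gamma (\<alpha> * real k + 1)" by linarith
    moreover have "Gamma (\<alpha> * real k + 1) > 0" using \<alpha>k by simp
    ultimately show ?thesis using c(1) by (simp add: field_simps power_one_over)
  qed
  then show ?thesis by blast
qed

lemma summable_ml_powser:
  assumes "\<alpha> > 0"
  shows "summable (\<lambda>k. ml_coeff \<alpha> k * y ^ k)"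
proof -
  obtain B where B: "\<And>k. \<bar>y\<bar> ^ k / Gamma (\<alpha> * real k + 1) \<le> B * (1/2) ^ k"
    using ml_term_geometric_bound[OF assms, of y] by blast
  have "norm (ml_coeff \<alpha> k * y ^ k) \<le> B * (1/2) ^ k" for k
    using B[of k] ml_coeff_pos[of \<alpha> k] assms
    by (simp add: ml_coeff_def abs_mult power_abs field_simps)
  moreover have "summable (\<lambda>k. B * (1/2::real) ^ k)" by (intro summable_mult summable_geometric) simp
  ultimately show ?thesis by (rule summable_comparison_test'[rotated])
qed

lemma mittag_leffler_0 [simp]: "mittag_leffler \<alpha> 0 = 1"
  unfolding mittag_leffler_powser using powser_zero[of "ml_coeff \<alpha>"] by simp

lemma mittag_leffler_ge_one:
  assumes "\<alpha> > 0" "x \<ge> 0"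
  shows "mittag_leffler \<alpha> x \<ge> 1"
proof -
  have "(\<Sum>k\<in>{0}. ml_coeff \<alpha> k * x ^ k) \<le> (\<Sum>k. ml_coeff \<alpha> k * x ^ k)"
    using assms
    by (intro sum_le_suminf summable_ml_powser) (auto intro!: mult_nonneg_nonneg less_imp_le[OF ml_coeff_pos])
  then show ?thesis by (simp add: mittag_leffler_powser)
qed

lemma mittag_leffler_tendsto_alpha:
  assumes "\<alpha> > 0" and r: "r \<longlonglongrightarrow> \<alpha>"
  shows "(\<lambda>n. mittag_leffler (r n) x) \<longlonglongrightarrow> mittag_leffler \<alpha> x"
proof -
  obtain B where B: "\<And>\<beta> k. \<beta> \<ge> \<alpha>/2 \<Longrightarrow> \<bar>x\<bar> ^ k / Gamma (\<beta> * real k + 1) \<le> B * (1/2) ^ k"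
    using ml_term_geometric_bound[of "\<alpha>/2" x] assms by auto
  have term_lim: "(\<lambda>n. x ^ k / Gamma (r n * real k + 1)) \<longlonglongrightarrow> x ^ k / Gamma (\<alpha> * real k + 1)" for k
  proof -
    have pos: "\<alpha> * real k + 1 > 0" using assms by (simp add: add_nonneg_pos)
    then have "isCont Gamma (\<alpha> * real k + 1)" by (auto intro!: isCont_Gamma elim!: nonpos_Ints_cases)
    then have "(\<lambda>n. Gamma (r n * real k + 1)) \<longlonglongrightarrow> Gamma (\<alpha> * real k + 1)"
      by (rule isCont_tendsto_compose) (intro tendsto_intros r)
    then show ?thesis by (rule tendsto_divide[OF tendsto_const]) (use Gamma_real_pos[OF pos] in simp)
  qed
  have "eventually (\<lambda>n. r n > \<alpha>/2) sequentially"
    by (rule order_tendstoD(1)[OF r]) (use assms in simp)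
  then have "\<forall>\<^sub>F (k, n) in sequentially \<times>\<^sub>F sequentially.
      norm (x ^ k / Gamma (r n * real k + 1)) \<le> B * (1/2) ^ k"
    unfolding eventually_prod_filter
  proof (intro exI conjI allI impI)
    fix k n assume "r n > \<alpha>/2"
    then have "\<alpha>/2 \<le> r n" "0 \<le> r n * real k" using assms by auto
    then show "case (k, n) of (k, n) \<Rightarrow> norm (x ^ k / Gamma (r n * real k + 1)) \<le> B * (1/2) ^ k"
      using B[of "r n" k] by (simp add: power_abs add_nonneg_pos)
  qed auto
  moreover have "summable (\<lambda>k. B * (1/2::real) ^ k)" by (intro summable_mult summable_geometric) simp
  ultimately show ?thesis
    using tannerys_theorem[OF term_lim] unfolding mittag_leffler_def by simp
qed

section \<open>Log-convexity of power series\<close>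

lemma ln_powser_has_derivatives:
  fixes c :: "nat \<Rightarrow> real"
  defines "f \<equiv> \<lambda>x. \<Sum>n. c n * x ^ n"
    and "f' \<equiv> \<lambda>x. \<Sum>n. diffs c n * x ^ n"
    and "f'' \<equiv> \<lambda>x. \<Sum>n. diffs (diffs c) n * x ^ n"
  assumes summable: "\<And>y. summable (\<lambda>n. c n * y ^ n)" and pos: "0 < f x"
  shows "((\<lambda>x. ln (f x)) has_real_derivative f' x / f x) (at x)"
    and "((\<lambda>x. f' x / f x) has_real_derivative (f x * f'' x - (f' x)\<^sup>2) / (f x)\<^sup>2) (at x)"
proof -
  have "\<And>y. summable (\<lambda>n. diffs c n * y ^ n)" by (rule termdiff_converges_all[OF summable])
  then have D1: "(f has_real_derivative f' x) (at x)" and D2: "(f' has_real_derivative f'' x) (at x)"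
    unfolding f_def f'_def f''_def using summable by (auto intro: termdiffs_strong_converges_everywhere)
  show "((\<lambda>x. ln (f x)) has_real_derivative f' x / f x) (at x)"
    using DERIV_chain2[OF DERIV_ln_divide[OF pos] D1] by simp
  show "((\<lambda>x. f' x / f x) has_real_derivative (f x * f'' x - (f' x)\<^sup>2) / (f x)\<^sup>2) (at x)"
    using DERIV_divide[OF D2 D1] pos by (simp add: power2_eq_square mult.commute)
qed

lemma convex_on_ln_powser:
  fixes c :: "nat \<Rightarrow> real"
  assumes "\<And>y. summable (\<lambda>n. c n * y ^ n)" and "convex S"
    and "\<And>x. x \<in> S \<Longrightarrow> 0 < (\<Sum>n. c n * x ^ n)"
    and "\<And>x. x \<in> S \<Longrightarrow>
      (\<Sum>n. diffs c n * x ^ n)\<^sup>2 \<le> (\<Sum>n. c n * x ^ n) * (\<Sum>n. diffs (diffs c) n * x ^ n)"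
  shows "convex_on S (\<lambda>x. ln (\<Sum>n. c n * x ^ n))"
  by (rule f''_ge0_imp_convex[OF assms(2), where f' = "\<lambda>x. (\<Sum>n. diffs c n * x ^ n) / (\<Sum>n. c n * x ^ n)"],
      fact ln_powser_has_derivatives[OF assms(1) assms(3)],
      fact ln_powser_has_derivatives(2)[OF assms(1) assms(3)])
     (use assms(3,4) in auto)

lemma concave_on_ln_powser:
  fixes c :: "nat \<Rightarrow> real"
  assumes "\<And>y. summable (\<lambda>n. c n * y ^ n)" and "convex S"
    and "\<And>x. x \<in> S \<Longrightarrow> 0 < (\<Sum>n. c n * x ^ n)"
    and "\<And>x. x \<in> S \<Longrightarrow>
      (\<Sum>n. c n * x ^ n) * (\<Sum>n. diffs (diffs c) n * x ^ n) \<le> (\<Sum>n. diffs c n * x ^ n)\<^sup>2"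
  shows "concave_on S (\<lambda>x. ln (\<Sum>n. c n * x ^ n))"
  by (rule f''_le0_imp_concave[OF assms(2), where f' = "\<lambda>x. (\<Sum>n. diffs c n * x ^ n) / (\<Sum>n. c n * x ^ n)"],
      fact ln_powser_has_derivatives[OF assms(1) assms(3)],
      fact ln_powser_has_derivatives(2)[OF assms(1) assms(3)])
     (use assms(4) in \<open>auto intro!: divide_nonpos_nonneg\<close>)

lemma powser_sums_diffs_moments:
  fixes c :: "nat \<Rightarrow> real"
  assumes summable: "\<And>y. summable (\<lambda>n. c n * y ^ n)"
  shows "(\<lambda>n. real n * c n * x ^ n) sums (x * (\<Sum>n. diffs c n * x ^ n))"
    and "(\<lambda>n. real n * (real n - 1) * c n * x ^ n) sums (x\<^sup>2 * (\<Sum>n. diffs (diffs c) n * x ^ n))"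
proof -
  have S1: "summable (\<lambda>n. diffs c n * y ^ n)" for y by (rule termdiff_converges_all[OF summable])
  have S2: "summable (\<lambda>n. diffs (diffs c) n * y ^ n)" for y by (rule termdiff_converges_all[OF S1])
  have "(\<lambda>n. x * (diffs c n * x ^ n)) sums (x * (\<Sum>n. diffs c n * x ^ n))"
    by (intro sums_mult summable_sums S1)
  then have "(\<lambda>n. real (Suc n) * c (Suc n) * x ^ Suc n) sums (x * (\<Sum>n. diffs c n * x ^ n))"
    by (simp add: diffs_def algebra_simps)
  then show "(\<lambda>n. real n * c n * x ^ n) sums (x * (\<Sum>n. diffs c n * x ^ n))"
    using sums_Suc_iff[of "\<lambda>n. real n * c n * x ^ n"] by simp
  have "(\<lambda>n. x\<^sup>2 * (diffs (diffs c) n * x ^ n)) sums (x\<^sup>2 * (\<Sum>n. diffs (diffs c) n * x ^ n))"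
    by (intro sums_mult summable_sums S2)
  then have "(\<lambda>n. real (Suc (Suc n)) * (real (Suc (Suc n)) - 1) * c (Suc (Suc n)) * x ^ Suc (Suc n))
      sums (x\<^sup>2 * (\<Sum>n. diffs (diffs c) n * x ^ n))"
    by (simp add: diffs_def algebra_simps power2_eq_square)
  then show "(\<lambda>n. real n * (real n - 1) * c n * x ^ n) sums (x\<^sup>2 * (\<Sum>n. diffs (diffs c) n * x ^ n))"
    using sums_Suc_iff[of "\<lambda>n. real n * (real n - 1) * c n * x ^ n"]
      sums_Suc_iff[of "\<lambda>n. real (Suc n) * (real (Suc n) - 1) * c (Suc n) * x ^ Suc n"] by simp
qed

section \<open>Log-concavity for \<open>\<alpha> > 1\<close>\<close>

lemma concave_on_ln_Gamma_ratio:
  assumes "\<alpha> \<ge> 1"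
  shows "concave_on {0..} (\<lambda>t. ln_Gamma (t + 1) - ln_Gamma (\<alpha> * t + 1))"
proof (rule f''_le0_imp_concave[where f' = "\<lambda>t. Digamma (t + 1) - \<alpha> * Digamma (\<alpha> * t + 1)"
     and f'' = "\<lambda>t. Polygamma 1 (t + 1) - \<alpha>\<^sup>2 * Polygamma 1 (\<alpha> * t + 1)"])
  fix t :: real assume "t \<in> {0..}"
  then have pos: "t + 1 > 0" "\<alpha> * t + 1 > 0" using assms by (auto simp: add_nonneg_pos)
  then have not_nonpos_Int: "t + 1 \<notin> \<int>\<^sub>\<le>\<^sub>0" "\<alpha> * t + 1 \<notin> \<int>\<^sub>\<le>\<^sub>0"
    by (auto elim!: nonpos_Ints_cases)
  show "((\<lambda>t. ln_Gamma (t + 1) - ln_Gamma (\<alpha> * t + 1)) has_real_derivative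
      Digamma (t + 1) - \<alpha> * Digamma (\<alpha> * t + 1)) (at t)"
    using pos by (auto intro!: derivative_eq_intros)
  show "((\<lambda>t. Digamma (t + 1) - \<alpha> * Digamma (\<alpha> * t + 1)) has_real_derivative
      Polygamma 1 (t + 1) - \<alpha>\<^sup>2 * Polygamma 1 (\<alpha> * t + 1)) (at t)"
    using not_nonpos_Int by (auto intro!: derivative_eq_intros simp: power2_eq_square)
  have "(\<lambda>k. inverse ((t + 1 + real k)\<^sup>2)) sums Polygamma 1 (t + 1)"
    using Polygamma_LIMSEQ[of "t + 1" 1] pos by (simp add: power2_eq_square)
  moreover have "(\<lambda>k. \<alpha>\<^sup>2 * inverse ((\<alpha> * t + 1 + real k)\<^sup>2)) sums (\<alpha>\<^sup>2 * Polygamma 1 (\<alpha> * t + 1))"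
    using Polygamma_LIMSEQ[of "\<alpha> * t + 1" 1] pos by (intro sums_mult) (simp add: power2_eq_square)
  moreover have "inverse ((t + 1 + real k)\<^sup>2) \<le> \<alpha>\<^sup>2 * inverse ((\<alpha> * t + 1 + real k)\<^sup>2)" for k
  proof -
    have "0 < \<alpha> * t + 1 + real k" "\<alpha> * t + 1 + real k \<le> \<alpha> * (t + 1 + real k)"
      using pos assms mult_right_mono[OF assms, of "real k"] by (auto simp: algebra_simps)
    then have "(\<alpha> * t + 1 + real k)\<^sup>2 \<le> \<alpha>\<^sup>2 * (t + 1 + real k)\<^sup>2"
      by (metis power_mono power_mult_distrib less_imp_le)
    then show ?thesis using pos by (simp add: field_simps)
  qed
  ultimately have "Polygamma 1 (t + 1) \<le> \<alpha>\<^sup>2 * Polygamma 1 (\<alpha> * t + 1)"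
    by (rule sums_le[rotated])
  then show "Polygamma 1 (t + 1) - \<alpha>\<^sup>2 * Polygamma 1 (\<alpha> * t + 1) \<le> 0" by simp
qed simp

lemma concave_on_sum_le_ordered:
  fixes \<phi> :: "real \<Rightarrow> real"
  assumes conc: "concave_on S \<phi>" and "a' \<in> S" "b' \<in> S"
    and "a' \<le> a" "a \<le> b" "b \<le> b'" "a + b = a' + b'"
  shows "\<phi> a' + \<phi> b' \<le> \<phi> a + \<phi> b"
proof (cases "a' = b'")
  case True
  then have "a = b'" "b = b'" using assms by linarith+
  then show ?thesis using True by simp
next
  case False
  define t where "t = (a - a') / (b' - a')"
  have t: "0 \<le> t" "t \<le> 1" using assms False by (auto simp: t_def field_simps)
  have "t * (b' - a') = a - a'" using False by (simp add: t_def)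
  then have a: "(1 - t) *\<^sub>R a' + t *\<^sub>R b' = a" and b: "(1 - (1 - t)) *\<^sub>R a' + (1 - t) *\<^sub>R b' = b"
    using assms by (simp_all add: algebra_simps; linarith)+
  have "(1 - t) * \<phi> a' + t * \<phi> b' \<le> \<phi> a"
    using assms t concave_onD[OF conc, of t a' b'] by (simp only: a)
  moreover have "t * \<phi> a' + (1 - t) * \<phi> b' \<le> \<phi> b"
    using assms t concave_onD[OF conc, of "1 - t" a' b'] by (simp only: b) simp
  ultimately show ?thesis by (simp add: algebra_simps)
qed

lemma concave_on_sum_le_of_spread:
  fixes \<phi> :: "real \<Rightarrow> real"
  assumes "concave_on S \<phi>" and "x' \<in> S" "y' \<in> S"
    and "x + y = x' + y'" "\<bar>x - y\<bar> \<le> \<bar>x' - y'\<bar>"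
  shows "\<phi> x' + \<phi> y' \<le> \<phi> x + \<phi> y"
proof -
  have sorted: "\<phi> u + \<phi> v = \<phi> (min u v) + \<phi> (max u v)" for u v
    by (simp add: min_def max_def add.commute)
  have "\<phi> (min x' y') + \<phi> (max x' y') \<le> \<phi> (min x y) + \<phi> (max x y)"
    by (rule concave_on_sum_le_ordered[OF assms(1)]) (use assms(2-) in \<open>auto simp: min_def max_def abs_if split: if_splits\<close>)
  then show ?thesis by (simp only: sorted[symmetric])
qed

lemma Chebyshev_sum_upper_weighted:
  fixes C u w :: "'i \<Rightarrow> real"
  assumes "\<And>i. i \<in> I \<Longrightarrow> 0 \<le> C i"
    and "\<And>i j. i \<in> I \<Longrightarrow> j \<in> I \<Longrightarrow> (u i - u j) * (w i - w j) \<le> 0"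
  shows "(\<Sum>i\<in>I. C i) * (\<Sum>i\<in>I. C i * u i * w i) \<le> (\<Sum>i\<in>I. C i * u i) * (\<Sum>i\<in>I. C i * w i)"
proof -
  have "(\<Sum>i\<in>I. \<Sum>j\<in>I. C i * C j * ((u i - u j) * (w i - w j))) \<le> 0"
    by (intro sum_nonpos mult_nonneg_nonpos mult_nonneg_nonneg assms)
  moreover have "(\<Sum>i\<in>I. \<Sum>j\<in>I. C i * C j * ((u i - u j) * (w i - w j)))
    = (\<Sum>i\<in>I. \<Sum>j\<in>I. (C i * u i * w i) * C j + C i * (C j * u j * w j)
        - ((C i * u i) * (C j * w j) + (C i * w i) * (C j * u j)))"
    by (intro sum.cong refl) (simp add: algebra_simps)
  also have "\<dots> = (\<Sum>i\<in>I. C i * u i * w i) * (\<Sum>j\<in>I. C j) + (\<Sum>i\<in>I. C i) * (\<Sum>j\<in>I. C j * u j * w j)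
      - ((\<Sum>i\<in>I. C i * u i) * (\<Sum>j\<in>I. C j * w j) + (\<Sum>i\<in>I. C i * w i) * (\<Sum>j\<in>I. C j * u j))"
    by (simp only: sum_product sum.distrib sum_subtractf)
  ultimately show ?thesis by (simp add: algebra_simps)
qed

lemma choose_linear_sum_real: "2 * (\<Sum>i\<le>n. real i * real (n choose i)) = real n * 2 ^ n"
proof (cases n)
  case (Suc m)
  have "(\<Sum>i\<le>n. real i * real (n choose i)) = real (\<Sum>i\<le>n. i * (n choose i))" by simp
  also have "\<dots> = real n * 2 ^ (n - 1)" by (simp only: choose_linear_sum) simp
  finally show ?thesis using Suc by simp
qed simp

lemma choose_quadratic_sum_real: "4 * (\<Sum>i\<le>n. (real i)\<^sup>2 * real (n choose i)) = real n * (real n + 1) * 2 ^ n"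
proof (cases n)
  case (Suc m)
  have row_sum: "(\<Sum>i\<le>m. real (m choose i)) = 2 ^ m"
    using choose_row_sum[of m] by (metis of_nat_numeral of_nat_power of_nat_sum)
  have "(\<Sum>i\<le>Suc m. (real i)\<^sup>2 * real (Suc m choose i))
      = (\<Sum>i\<le>m. (real (Suc i))\<^sup>2 * real (Suc m choose Suc i))"
    by (subst sum.atMost_Suc_shift) (simp del: binomial_Suc_Suc)
  also have "\<dots> = (\<Sum>i\<le>m. real (Suc m) * (real i * real (m choose i) + real (m choose i)))"
  proof (rule sum.cong[OF refl])
    fix i
    have "real (Suc i * (Suc m choose Suc i)) = real (Suc m * (m choose i))"
      by (simp only: Suc_times_binomial)
    then have key: "real (Suc i) * real (Suc m choose Suc i) = real (Suc m) * real (m choose i)"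
      by (simp only: of_nat_mult)
    have "(real (Suc i))\<^sup>2 * real (Suc m choose Suc i) = real (Suc i) * (real (Suc i) * real (Suc m choose Suc i))"
      by (simp only: power2_eq_square mult.assoc)
    also have "\<dots> = real (Suc i) * (real (Suc m) * real (m choose i))" by (simp only: key)
    finally show "(real (Suc i))\<^sup>2 * real (Suc m choose Suc i)
        = real (Suc m) * (real i * real (m choose i) + real (m choose i))"
      by (simp add: algebra_simps)
  qed
  also have "\<dots> = real (Suc m) * ((\<Sum>i\<le>m. real i * real (m choose i)) + 2 ^ m)"
    by (simp only: sum.distrib sum_distrib_left[symmetric] row_sum)
  finally have "4 * (\<Sum>i\<le>Suc m. (real i)\<^sup>2 * real (Suc m choose i))
      = real (Suc m) * (2 * (2 * (\<Sum>i\<le>m. real i * real (m choose i))) + 4 * 2 ^ m)"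
    by (simp add: algebra_simps)
  also have "\<dots> = real (Suc m) * (2 * (real m * 2 ^ m) + 4 * 2 ^ m)" by (simp only: choose_linear_sum_real)
  finally show ?thesis using Suc by (simp add: algebra_simps)
qed simp

text \<open>The binomial distribution with parameter \<open>1/2\<close> has variance \<open>m/4\<close>.\<close>
lemma sum_choose_centered_square: "(\<Sum>i\<le>m. real (m choose i) * ((real m - 2 * real i)\<^sup>2 - real m)) = 0"
proof -
  have "(\<Sum>i\<le>m. real (m choose i) * ((real m - 2 * real i)\<^sup>2 - real m))
      = ((real m)\<^sup>2 - real m) * (\<Sum>i\<le>m. real (m choose i))
        - 2 * real m * (2 * (\<Sum>i\<le>m. real i * real (m choose i)))
        + 4 * (\<Sum>i\<le>m. (real i)\<^sup>2 * real (m choose i))"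
    by (simp add: power2_eq_square algebra_simps sum_distrib_left sum_subtractf sum.distrib)
  also have "(\<Sum>i\<le>m. real (m choose i)) = 2 ^ m"
    using choose_row_sum[of m] by (metis of_nat_numeral of_nat_power of_nat_sum)
  finally show ?thesis
    by (simp only: choose_linear_sum_real choose_quadratic_sum_real) (simp add: algebra_simps power2_eq_square)
qed

lemma convolution_weights_symmetrize:
  fixes a :: "nat \<Rightarrow> real"
  shows "(\<Sum>i\<le>m. a i * a (m - i) * ((real m - real i) * (real m - real i - 1)))
       - (\<Sum>i\<le>m. a i * a (m - i) * (real i * (real m - real i)))
       = (\<Sum>i\<le>m. a i * a (m - i) * ((real m - 2 * real i)\<^sup>2 - real m)) / 2"
proof -
  define h where "h i = a i * a (m - i)" for i
  have "(\<Sum>i\<le>m. h i * ((real m - real i) * (real m - real i - 1)))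
      = (\<Sum>i\<le>m. h (m - i) * ((real m - real (m - i)) * (real m - real (m - i) - 1)))"
    by (rule sum.reindex_bij_witness[where i="\<lambda>i. m - i" and j="\<lambda>i. m - i"]) auto
  also have "\<dots> = (\<Sum>i\<le>m. h i * (real i * (real i - 1)))"
    by (intro sum.cong refl) (auto simp: h_def of_nat_diff)
  finally have reflected: "(\<Sum>i\<le>m. h i * ((real m - real i) * (real m - real i - 1)))
      = (\<Sum>i\<le>m. h i * (real i * (real i - 1)))" .
  have "(\<Sum>i\<le>m. h i * ((real m - real i) * (real m - real i - 1)))
        - (\<Sum>i\<le>m. h i * (real i * (real m - real i)))
      = ((\<Sum>i\<le>m. h i * ((real m - real i) * (real m - real i - 1)))
          + (\<Sum>i\<le>m. h i * (real i * (real i - 1)))) / 2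
        - (\<Sum>i\<le>m. h i * (real i * (real m - real i)))"
    using reflected by simp
  also have "\<dots> = (\<Sum>i\<le>m. (h i * ((real m - real i) * (real m - real i - 1))
      + h i * (real i * (real i - 1))) / 2 - h i * (real i * (real m - real i)))"
    by (simp only: sum_subtractf sum_divide_distrib[symmetric] sum.distrib)
  also have "\<dots> = (\<Sum>i\<le>m. h i * ((real m - 2 * real i)\<^sup>2 - real m) / 2)"
    by (intro sum.cong refl) (simp add: power2_eq_square field_simps)
  also have "\<dots> = (\<Sum>i\<le>m. h i * ((real m - 2 * real i)\<^sup>2 - real m)) / 2"
    by (simp add: sum_divide_distrib)
  finally show ?thesis unfolding h_def .
qed

lemma ml_coeff_eq_exp_ln_Gamma:
  assumes "\<alpha> \<ge> 0"
  shows "ml_coeff \<alpha> k = exp (ln_Gamma (real k + 1) - ln_Gamma (\<alpha> * real k + 1)) / fact k"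
proof -
  have "Gamma (real k + 1) = fact k" using Gamma_fact[of k] by (simp add: add.commute)
  moreover have "0 < \<alpha> * real k + 1" using assms by (simp add: add_nonneg_pos)
  ultimately show ?thesis
    by (simp add: ml_coeff_def Gamma_real_pos_exp exp_diff field_simps)
qed

lemma ml_coeff_convolution_nonpos:
  assumes "\<alpha> \<ge> 1"
  shows "(\<Sum>i\<le>m. ml_coeff \<alpha> i * ml_coeff \<alpha> (m - i) * ((real m - 2 * real i)\<^sup>2 - real m)) \<le> 0"
proof -
  define \<phi> where "\<phi> t = ln_Gamma (t + 1) - ln_Gamma (\<alpha> * t + 1)" for t
  define C where "C i = real (m choose i)" for i
  define u where "u i = (real m - 2 * real i)\<^sup>2 - real m" for i
  define w where "w i = exp (\<phi> (real i) + \<phi> (real (m - i)))" for i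
  have terms: "ml_coeff \<alpha> i * ml_coeff \<alpha> (m - i) * u i = C i * u i * w i / fact m" if "i \<le> m" for i
    using assms that
    by (simp add: ml_coeff_eq_exp_ln_Gamma C_def binomial_fact w_def \<phi>_def exp_add exp_diff mult_ac)
  have monotone: "u i \<le> u j \<and> w j \<le> w i" if "i \<le> m" "j \<le> m" "\<bar>real m - 2 * real i\<bar> \<le> \<bar>real m - 2 * real j\<bar>" for i j
  proof
    show "u i \<le> u j" using that by (simp add: u_def abs_le_square_iff)
    have "\<phi> (real j) + \<phi> (real (m - j)) \<le> \<phi> (real i) + \<phi> (real (m - i))"
      using that unfolding \<phi>_def
      by (intro concave_on_sum_le_of_spread[OF concave_on_ln_Gamma_ratio[OF assms]])
         (auto simp: of_nat_diff abs_minus_commute)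
    then show "w j \<le> w i" by (simp add: w_def)
  qed
  have "(u i - u j) * (w i - w j) \<le> 0" if "i \<le> m" "j \<le> m" for i j
  proof (cases "\<bar>real m - 2 * real i\<bar> \<le> \<bar>real m - 2 * real j\<bar>")
    case True
    then show ?thesis using monotone[of i j] that by (intro mult_nonpos_nonneg) auto
  next
    case False
    then show ?thesis using monotone[of j i] that by (intro mult_nonneg_nonpos) auto
  qed
  then have "(\<Sum>i\<le>m. C i) * (\<Sum>i\<le>m. C i * u i * w i) \<le> (\<Sum>i\<le>m. C i * u i) * (\<Sum>i\<le>m. C i * w i)"
    by (intro Chebyshev_sum_upper_weighted) (auto simp: C_def)
  moreover have "(\<Sum>i\<le>m. C i * u i) = 0" unfolding C_def u_def by (rule sum_choose_centered_square)
  moreover have "(\<Sum>i\<le>m. C i) > 0"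
    unfolding C_def by (metis choose_row_sum of_nat_0_less_iff of_nat_sum pos2 zero_less_power)
  ultimately have "(\<Sum>i\<le>m. C i * u i * w i) / fact m \<le> 0"
    by (simp add: mult_le_0_iff divide_nonpos_pos)
  moreover have "(\<Sum>i\<le>m. ml_coeff \<alpha> i * ml_coeff \<alpha> (m - i) * u i) = (\<Sum>i\<le>m. C i * u i * w i) / fact m"
    unfolding sum_divide_distrib by (rule sum.cong) (simp_all add: terms)
  ultimately show ?thesis by (simp add: u_def)
qed

text \<open>The Cauchy product turns \<open>x\<^sup>2 (f f'' - f'\<^sup>2)\<close> into a power series whose \<open>m\<close>-th
  coefficient is half of the convolution sum in the hypothesis.\<close>
lemma powser_diffs_square_ge:
  fixes c :: "nat \<Rightarrow> real"
  assumes summable: "\<And>y. summable (\<lambda>n. c n * y ^ n)" and nonneg: "\<And>n. 0 \<le> c n" and "x > 0"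
    and coeff: "\<And>m. (\<Sum>i\<le>m. c i * c (m - i) * ((real m - 2 * real i)\<^sup>2 - real m)) \<le> 0"
  shows "(\<Sum>n. c n * x ^ n) * (\<Sum>n. diffs (diffs c) n * x ^ n) \<le> (\<Sum>n. diffs c n * x ^ n)\<^sup>2"
proof -
  define f f' f'' where "f = (\<Sum>n. c n * x ^ n)" and "f' = (\<Sum>n. diffs c n * x ^ n)"
    and "f'' = (\<Sum>n. diffs (diffs c) n * x ^ n)"
  define g0 g1 g2 where "g0 n = c n * x ^ n" and "g1 n = real n * c n * x ^ n"
    and "g2 n = real n * (real n - 1) * c n * x ^ n" for n
  have sums: "g0 sums f" "g1 sums (x * f')" "g2 sums (x\<^sup>2 * f'')"
    using summable_sums[OF summable] powser_sums_diffs_moments[OF summable]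
    unfolding f_def f'_def f''_def g0_def g1_def g2_def by auto
  have "0 \<le> g0 n" "0 \<le> g1 n" "0 \<le> g2 n" for n
    using nonneg[of n] \<open>x > 0\<close> unfolding g0_def g1_def g2_def by (cases n; simp)+
  then have abs_summable: "summable (\<lambda>n. norm (g0 n))" "summable (\<lambda>n. norm (g1 n))"
    "summable (\<lambda>n. norm (g2 n))"
    using sums by (auto simp: sums_iff)
  have "(\<lambda>m. (\<Sum>i\<le>m. g0 i * g2 (m - i)) - (\<Sum>i\<le>m. g1 i * g1 (m - i)))
      sums (f * (x\<^sup>2 * f'') - (x * f') * (x * f'))"
    using Cauchy_product_sums[OF abs_summable(1,3)] Cauchy_product_sums[OF abs_summable(2,2)] sums
    by (intro sums_diff) (auto simp: sums_iff)
  moreover have "(\<Sum>i\<le>m. g0 i * g2 (m - i)) - (\<Sum>i\<le>m. g1 i * g1 (m - i)) \<le> 0" for m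
  proof -
    have "(\<Sum>i\<le>m. g0 i * g2 (m - i)) - (\<Sum>i\<le>m. g1 i * g1 (m - i))
        = x ^ m * ((\<Sum>i\<le>m. c i * c (m - i) * ((real m - real i) * (real m - real i - 1)))
          - (\<Sum>i\<le>m. c i * c (m - i) * (real i * (real m - real i))))"
      unfolding right_diff_distrib sum_distrib_left
      by (intro arg_cong2[where f = "(-)"] sum.cong refl)
         (auto simp: g0_def g1_def g2_def of_nat_diff power_add[symmetric] algebra_simps)
    also have "\<dots> \<le> 0"
      unfolding convolution_weights_symmetrize using coeff[of m] \<open>x > 0\<close>
      by (simp add: mult_nonneg_nonpos)
    finally show ?thesis .
  qed
  ultimately have "f * (x\<^sup>2 * f'') - (x * f') * (x * f') \<le> 0"
    by (rule sums_le[OF _ _ sums_zero, rotated])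
  then have "x\<^sup>2 * (f * f'' - f'\<^sup>2) \<le> 0" by (simp add: algebra_simps power2_eq_square)
  then show ?thesis using \<open>x > 0\<close> by (simp add: f_def f'_def f''_def mult_le_0_iff)
qed

lemma log_concave_on_mittag_leffler:
  assumes "\<alpha> > 1"
  shows "log_concave_on {0<..} (mittag_leffler \<alpha>)"
proof -
  have pos: "0 < mittag_leffler \<alpha> x" if "x \<ge> 0" for x
    using mittag_leffler_ge_one[of \<alpha> x] assms that by simp
  have "concave_on {0<..} (\<lambda>x. ln (\<Sum>n. ml_coeff \<alpha> n * x ^ n))"
    using assms pos[unfolded mittag_leffler_powser]
    by (intro concave_on_ln_powser powser_diffs_square_ge summable_ml_powser
        ml_coeff_convolution_nonpos less_imp_le[OF ml_coeff_pos]) auto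
  then show ?thesis
    using pos unfolding log_concave_on_def mittag_leffler_powser by auto
qed

section \<open>Log-convexity from Hankel positivity\<close>

text \<open>If \<open>b n = \<integral> t\<^sup>n d\<mu>\<close> for a measure \<open>\<mu>\<close> on \<open>[0,\<infinity>)\<close>, the form below is
  \<open>\<integral> (\<Sum>i. v i t\<^sup>i)\<^sup>2 (l + m t)\<^sup>2 d\<mu> \<ge> 0\<close>.\<close>
definition hankel_psd :: "(nat \<Rightarrow> real) \<Rightarrow> bool" where
  "hankel_psd b \<longleftrightarrow> (\<forall>N (v :: nat \<Rightarrow> real) l m.
     0 \<le> (\<Sum>i<N. \<Sum>j<N. v i * v j * (l\<^sup>2 * b (i + j) + 2 * l * m * b (i + j + 1) + m\<^sup>2 * b (i + j + 2))))"

definition moment_sequence :: "(nat \<Rightarrow> real) \<Rightarrow> bool" where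
  "moment_sequence u \<longleftrightarrow> (\<exists>(\<phi> :: real \<Rightarrow> real) w S. (\<forall>t\<in>S. 0 \<le> w t) \<and>
     (\<forall>n. ((\<lambda>t. \<phi> t ^ n * w t) has_integral u n) S))"

lemma hankel_psdD:
  "hankel_psd b \<Longrightarrow>
    0 \<le> (\<Sum>i<N. \<Sum>j<N. v i * v j * (l\<^sup>2 * b (i + j) + 2 * l * m * b (i + j + 1) + m\<^sup>2 * b (i + j + 2)))"
  unfolding hankel_psd_def by blast

lemma hankel_psd_one: "hankel_psd (\<lambda>n. 1)"
proof -
  have double_sum: "(\<Sum>i<N. \<Sum>j<N. v i * v j * K) = (\<Sum>i<N. v i) * (\<Sum>j<N. v j) * K"
    for N v and K :: real
    by (simp add: sum_distrib_left sum_distrib_right mult.assoc) (rule sum.swap)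
  have square: "l\<^sup>2 + 2 * l * m + m\<^sup>2 = (l + m)\<^sup>2" for l m :: real
    by (simp add: power2_eq_square algebra_simps)
  show ?thesis unfolding hankel_psd_def mult_1_right square double_sum by simp
qed

lemma hankel_psd_cmult:
  assumes "hankel_psd b" "0 \<le> K"
  shows "hankel_psd (\<lambda>n. K * b n)"
  unfolding hankel_psd_def
proof (intro allI)
  fix N v and l m :: real
  have "(\<Sum>i<N. \<Sum>j<N. v i * v j * (l\<^sup>2 * (K * b (i + j)) + 2 * l * m * (K * b (i + j + 1)) + m\<^sup>2 * (K * b (i + j + 2))))
      = K * (\<Sum>i<N. \<Sum>j<N. v i * v j * (l\<^sup>2 * b (i + j) + 2 * l * m * b (i + j + 1) + m\<^sup>2 * b (i + j + 2)))"
    by (simp add: sum_distrib_left algebra_simps)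
  also have "\<dots> \<ge> 0" using hankel_psdD[OF assms(1)] assms(2) by simp
  finally show "0 \<le> (\<Sum>i<N. \<Sum>j<N. v i * v j * (l\<^sup>2 * (K * b (i + j)) + 2 * l * m * (K * b (i + j + 1)) + m\<^sup>2 * (K * b (i + j + 2))))" .
qed

lemma hankel_psd_mult_power:
  assumes "hankel_psd b"
  shows "hankel_psd (\<lambda>n. C ^ n * b n)"
  unfolding hankel_psd_def
proof (intro allI)
  fix N v and l m :: real
  have "(\<Sum>i<N. \<Sum>j<N. v i * v j * (l\<^sup>2 * (C ^ (i + j) * b (i + j)) + 2 * l * m * (C ^ (i + j + 1) * b (i + j + 1)) + m\<^sup>2 * (C ^ (i + j + 2) * b (i + j + 2))))
      = (\<Sum>i<N. \<Sum>j<N. (v i * C ^ i) * (v j * C ^ j) * (l\<^sup>2 * b (i + j) + 2 * l * (m * C) * b (i + j + 1) + (m * C)\<^sup>2 * b (i + j + 2)))"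
    by (intro sum.cong refl) (simp add: power_add power2_eq_square algebra_simps)
  also have "\<dots> \<ge> 0" by (rule hankel_psdD[OF assms])
  finally show "0 \<le> (\<Sum>i<N. \<Sum>j<N. v i * v j * (l\<^sup>2 * (C ^ (i + j) * b (i + j)) + 2 * l * m * (C ^ (i + j + 1) * b (i + j + 1)) + m\<^sup>2 * (C ^ (i + j + 2) * b (i + j + 2))))" .
qed

text \<open>The Hankel form of \<open>b\<cdot>u\<close> is the integral against \<open>w\<close> of the Hankel form of \<open>b\<close>
  evaluated at the vector \<open>v i \<phi>(t)\<^sup>i\<close> and at \<open>m \<phi>(t)\<close> in place of \<open>m\<close>.\<close>
lemma hankel_psd_mult_moment_sequence:
  assumes "hankel_psd b" and "moment_sequence u"
  shows "hankel_psd (\<lambda>n. b n * u n)"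
  unfolding hankel_psd_def
proof (intro allI)
  fix N v and l m :: real
  obtain \<phi> w and S :: "real set" where w: "\<And>t. t \<in> S \<Longrightarrow> 0 \<le> w t"
    and u: "\<And>n. ((\<lambda>t. \<phi> t ^ n * w t) has_integral u n) S"
    using assms(2) unfolding moment_sequence_def by blast
  define G where "G t = (\<Sum>i<N. \<Sum>j<N. v i * v j * (l\<^sup>2 * b (i + j) * (\<phi> t ^ (i + j) * w t)
      + 2 * l * m * b (i + j + 1) * (\<phi> t ^ (i + j + 1) * w t) + m\<^sup>2 * b (i + j + 2) * (\<phi> t ^ (i + j + 2) * w t)))" for t
  have "(G has_integral (\<Sum>i<N. \<Sum>j<N. v i * v j * (l\<^sup>2 * b (i + j) * u (i + j)
      + 2 * l * m * b (i + j + 1) * u (i + j + 1) + m\<^sup>2 * b (i + j + 2) * u (i + j + 2)))) S"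
    unfolding G_def by (intro has_integral_sum has_integral_mult_right has_integral_add u) auto
  moreover have "0 \<le> G t" if "t \<in> S" for t
  proof -
    have "G t = w t * (\<Sum>i<N. \<Sum>j<N. (v i * \<phi> t ^ i) * (v j * \<phi> t ^ j)
        * (l\<^sup>2 * b (i + j) + 2 * l * (m * \<phi> t) * b (i + j + 1) + (m * \<phi> t)\<^sup>2 * b (i + j + 2)))"
      unfolding G_def sum_distrib_left
      by (intro sum.cong refl) (simp add: power_add power2_eq_square algebra_simps)
    then show ?thesis using w[OF that] hankel_psdD[OF assms(1)] by simp
  qed
  ultimately show "0 \<le> (\<Sum>i<N. \<Sum>j<N. v i * v j * (l\<^sup>2 * (b (i + j) * u (i + j))
      + 2 * l * m * (b (i + j + 1) * u (i + j + 1)) + m\<^sup>2 * (b (i + j + 2) * u (i + j + 2))))"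
    by (simp add: has_integral_nonneg mult.assoc)
qed

lemma hankel_psd_prod_moment_sequences:
  fixes F :: "nat \<Rightarrow> nat \<Rightarrow> real"
  assumes "\<And>j. j < M \<Longrightarrow> moment_sequence (F j)"
  shows "hankel_psd (\<lambda>n. \<Prod>j<M. F j n)"
  using assms
proof (induction M)
  case 0
  then show ?case using hankel_psd_one by simp
next
  case (Suc M)
  then have "hankel_psd (\<lambda>n. (\<Prod>j<M. F j n) * F M n)"
    by (intro hankel_psd_mult_moment_sequence) auto
  then show ?case by (simp add: mult.commute)
qed

lemma nonneg_quadratic_form_coeffs:
  fixes A B C :: real
  assumes q: "\<And>l m. 0 \<le> l\<^sup>2 * A + 2 * l * m * B + m\<^sup>2 * C"
  shows "0 \<le> A" and "0 \<le> C" and "B\<^sup>2 \<le> A * C"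
proof -
  show A: "0 \<le> A" using q[of 1 0] by simp
  show C: "0 \<le> C" using q[of 0 1] by simp
  show "B\<^sup>2 \<le> A * C"
  proof (cases "A = 0")
    case False
    have "0 \<le> B\<^sup>2 * A + 2 * B * (- A) * B + (- A)\<^sup>2 * C" using q[of B "- A"] .
    then have "0 \<le> A * (A * C - B\<^sup>2)" by (simp add: power2_eq_square algebra_simps)
    then show ?thesis using A False by (simp add: zero_le_mult_iff)
  next
    case True
    define t where "t = 1 / (C + 1)"
    have t: "0 < t" "t * C < 2" using C by (auto simp: t_def field_simps)
    have "0 \<le> 1\<^sup>2 * A + 2 * 1 * (- B * t) * B + (- B * t)\<^sup>2 * C" using q[of 1 "- B * t"] .
    then have "0 \<le> B\<^sup>2 * (t * (t * C - 2))" using True by (simp add: power2_eq_square algebra_simps)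
    moreover have "t * (t * C - 2) < 0" using t by (simp add: mult_pos_neg)
    ultimately have "B\<^sup>2 \<le> 0" by (metis mult_zero_left mult_le_cancel_right_neg)
    then show ?thesis using True by simp
  qed
qed

lemma sum_triangle_binomial:
  fixes \<beta> :: "nat \<Rightarrow> real"
  shows "(\<Sum>(i, j)\<in>{(i, j). i + j < N}. y ^ i / fact i * (z ^ j / fact j) * \<beta> (i + j))
    = (\<Sum>n<N. \<beta> n / fact n * (y + z) ^ n)"
proof -
  have "(\<Sum>(i, j)\<in>{(i, j). i + j < N}. y ^ i / fact i * (z ^ j / fact j) * \<beta> (i + j))
      = (\<Sum>n<N. \<Sum>i\<le>n. y ^ i / fact i * (z ^ (n - i) / fact (n - i)) * \<beta> (i + (n - i)))"
    by (rule sum.triangle_reindex)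
  also have "\<dots> = (\<Sum>n<N. \<beta> n / fact n * (\<Sum>i\<le>n. of_nat (n choose i) * y ^ i * z ^ (n - i)))"
    by (intro sum.cong refl) (auto simp: sum_distrib_left binomial_fact field_simps)
  finally show ?thesis by (simp only: binomial_ring)
qed

text \<open>The square \<open>{..<N}\<^sup>2\<close> lies between the triangles \<open>i + j < N\<close> and \<open>i + j < 2N\<close>, and the
  absolute series bounds what lies between those.\<close>
lemma square_sums_tendsto_exp_series:
  fixes \<beta> :: "nat \<Rightarrow> real"
  assumes abs_summable: "summable (\<lambda>n. \<bar>\<beta> n\<bar> / fact n * (\<bar>y\<bar> + \<bar>z\<bar>) ^ n)"
  shows "(\<lambda>N. \<Sum>i<N. \<Sum>j<N. y ^ i / fact i * (z ^ j / fact j) * \<beta> (i + j))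
    \<longlonglongrightarrow> (\<Sum>n. \<beta> n / fact n * (y + z) ^ n)"
proof -
  define a where "a i j = y ^ i / fact i * (z ^ j / fact j) * \<beta> (i + j)" for i j
  define T where "T N = {(i, j). i + j < N}" for N :: nat
  define A where "A N = (\<Sum>n<N. \<bar>\<beta> n\<bar> / fact n * (\<bar>y\<bar> + \<bar>z\<bar>) ^ n)" for N
  have finite_T: "finite (T N)" for N
    by (rule finite_subset[of _ "{..<N} \<times> {..<N}"]) (auto simp: T_def)
  have T_abs: "(\<Sum>(i, j)\<in>T N. \<bar>a i j\<bar>) = A N" for N
    unfolding A_def T_def sum_triangle_binomial[symmetric]
    by (intro sum.cong refl) (auto simp: a_def abs_mult power_abs)
  have "summable (\<lambda>n. \<beta> n / fact n * (y + z) ^ n)"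
  proof (rule summable_comparison_test'[OF abs_summable])
    fix n
    have "\<bar>y + z\<bar> ^ n \<le> (\<bar>y\<bar> + \<bar>z\<bar>) ^ n" by (rule power_mono) auto
    from mult_left_mono[OF this, of "\<bar>\<beta> n\<bar> / fact n"]
    show "norm (\<beta> n / fact n * (y + z) ^ n) \<le> \<bar>\<beta> n\<bar> / fact n * (\<bar>y\<bar> + \<bar>z\<bar>) ^ n"
      by (simp add: abs_mult power_abs)
  qed
  then have triangle_lim: "(\<lambda>N. \<Sum>(i, j)\<in>T N. a i j) \<longlonglongrightarrow> (\<Sum>n. \<beta> n / fact n * (y + z) ^ n)"
    unfolding a_def T_def sum_triangle_binomial by (rule summable_LIMSEQ)
  have "A \<longlonglongrightarrow> (\<Sum>n. \<bar>\<beta> n\<bar> / fact n * (\<bar>y\<bar> + \<bar>z\<bar>) ^ n)"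
    unfolding A_def[abs_def] by (rule summable_LIMSEQ[OF abs_summable])
  moreover from this have "(\<lambda>N. A (2 * N)) \<longlonglongrightarrow> (\<Sum>n. \<bar>\<beta> n\<bar> / fact n * (\<bar>y\<bar> + \<bar>z\<bar>) ^ n)"
    by (rule LIMSEQ_subseq_LIMSEQ[unfolded o_def]) (simp add: strict_mono_def)
  ultimately have gap_lim: "(\<lambda>N. A (2 * N) - A N) \<longlonglongrightarrow> 0"
    using tendsto_diff by fastforce
  have "norm ((\<Sum>i<N. \<Sum>j<N. a i j) - (\<Sum>(i, j)\<in>T N. a i j)) \<le> A (2 * N) - A N" for N
  proof -
    have "(\<Sum>i<N. \<Sum>j<N. a i j) - (\<Sum>(i, j)\<in>T N. a i j) = (\<Sum>(i, j)\<in>{..<N} \<times> {..<N} - T N. a i j)"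
      by (subst sum_diff) (auto simp: T_def sum.cartesian_product)
    then have "norm ((\<Sum>i<N. \<Sum>j<N. a i j) - (\<Sum>(i, j)\<in>T N. a i j))
        \<le> (\<Sum>(i, j)\<in>{..<N} \<times> {..<N} - T N. \<bar>a i j\<bar>)"
      by (simp add: case_prod_unfold sum_abs)
    also have "\<dots> \<le> (\<Sum>(i, j)\<in>T (2 * N) - T N. \<bar>a i j\<bar>)"
      by (rule sum_mono2) (use finite_T[of "2 * N"] in \<open>auto simp: T_def\<close>)
    also have "\<dots> = A (2 * N) - A N"
      by (subst sum_diff[OF finite_T]) (auto simp: T_def T_abs[unfolded T_def])
    finally show ?thesis .
  qed
  then have "(\<lambda>N. (\<Sum>i<N. \<Sum>j<N. a i j) - (\<Sum>(i, j)\<in>T N. a i j)) \<longlonglongrightarrow> 0"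
    by (intro Lim_null_comparison[OF _ gap_lim]) simp
  from tendsto_add[OF this triangle_lim] show ?thesis unfolding a_def by simp
qed

lemma diffs_div_fact: "diffs (\<lambda>n. b n / fact n) = (\<lambda>n. (b (Suc n) :: 'a :: real_field) / fact n)"
  by (rule ext) (simp add: diffs_def field_simps del: of_nat_Suc)

text \<open>The Hankel forms of \<open>b\<close> at \<open>v\<^sub>i = y\<^sup>i / i!\<close> converge to combinations of \<open>F 0, F 1, F 2\<close>,
  which are \<open>f, f', f''\<close> for \<open>f(x) = \<Sum> b\<^sub>n x\<^sup>n / n!\<close>.\<close>
lemma hankel_psd_exp_series_forms_nonneg:
  fixes b :: "nat \<Rightarrow> real"
  defines "F \<equiv> \<lambda>e x. \<Sum>n. b (n + e) / fact n * x ^ n"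
  assumes psd: "hankel_psd b" and nonneg: "\<And>n. 0 \<le> b n"
    and summable: "\<And>y. summable (\<lambda>n. b n / fact n * y ^ n)"
  shows "0 \<le> l\<^sup>2 * F 0 (y + y) + 2 * l * m * F 0 (y + z) + m\<^sup>2 * F 0 (z + z)"
    and "0 \<le> l\<^sup>2 * F 0 x + 2 * l * m * F 1 x + m\<^sup>2 * F 2 x"
proof -
  define H where "H e y z N = (\<Sum>i<N. \<Sum>j<N. y ^ i / fact i * (z ^ j / fact j) * b (i + j + e))"
    for e y z N
  have summable_shift: "summable (\<lambda>n. b (n + e) / fact n * y ^ n)" for e y
  proof (induction e arbitrary: y)
    case (Suc e)
    then show ?case
      using termdiff_converges_all[of "\<lambda>n. b (n + e) / fact n"] by (simp add: diffs_div_fact)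
  qed (use summable in simp)
  have H_lim: "(\<lambda>N. H e y z N) \<longlonglongrightarrow> F e (y + z)" for e y z
  proof -
    have "summable (\<lambda>n. \<bar>b (n + e)\<bar> / fact n * (\<bar>y\<bar> + \<bar>z\<bar>) ^ n)"
      using summable_shift nonneg by simp
    from square_sums_tendsto_exp_series[OF this] show ?thesis by (simp add: H_def F_def add.assoc)
  qed
  have "0 \<le> l\<^sup>2 * H 0 y y N + l * m * H 0 y z N + l * m * H 0 z y N + m\<^sup>2 * H 0 z z N" for N
    using hankel_psdD[OF psd, where N = N and v = "\<lambda>i. l * (y ^ i / fact i) + m * (z ^ i / fact i)"
        and l = 1 and m = 0]
    by (simp add: H_def sum.distrib sum_distrib_left power2_eq_square algebra_simps)
  moreover have "(\<lambda>N. l\<^sup>2 * H 0 y y N + l * m * H 0 y z N + l * m * H 0 z y N + m\<^sup>2 * H 0 z z N)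
      \<longlonglongrightarrow> l\<^sup>2 * F 0 (y + y) + l * m * F 0 (y + z) + l * m * F 0 (z + y) + m\<^sup>2 * F 0 (z + z)"
    by (intro tendsto_intros H_lim)
  ultimately show "0 \<le> l\<^sup>2 * F 0 (y + y) + 2 * l * m * F 0 (y + z) + m\<^sup>2 * F 0 (z + z)"
    by (simp add: LIMSEQ_le_const add.commute algebra_simps)
  define w where "w = x / 2"
  have "0 \<le> l\<^sup>2 * H 0 w w N + 2 * l * m * H 1 w w N + m\<^sup>2 * H 2 w w N" for N
    using hankel_psdD[OF psd, where N = N and v = "\<lambda>i. w ^ i / fact i" and l = l and m = m]
    by (simp add: H_def sum.distrib sum_distrib_left power2_eq_square algebra_simps)
  moreover have "(\<lambda>N. l\<^sup>2 * H 0 w w N + 2 * l * m * H 1 w w N + m\<^sup>2 * H 2 w w N)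
      \<longlonglongrightarrow> l\<^sup>2 * F 0 (w + w) + 2 * l * m * F 1 (w + w) + m\<^sup>2 * F 2 (w + w)"
    by (intro tendsto_intros H_lim)
  ultimately show "0 \<le> l\<^sup>2 * F 0 x + 2 * l * m * F 1 x + m\<^sup>2 * F 2 x"
    by (simp add: LIMSEQ_le_const w_def)
qed

text \<open>Positivity of \<open>f(x)\<close> comes from \<open>f(0)\<^sup>2 \<le> f(x) f(-x)\<close>.\<close>
lemma log_convex_on_exp_series:
  fixes b :: "nat \<Rightarrow> real"
  assumes psd: "hankel_psd b" and nonneg: "\<And>n. 0 \<le> b n" and "0 < b 0"
    and summable: "\<And>y. summable (\<lambda>n. b n / fact n * y ^ n)"
  shows "log_convex_on UNIV (\<lambda>x. \<Sum>n. b n / fact n * x ^ n)"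
proof -
  define F where "F e x = (\<Sum>n. b (n + e) / fact n * x ^ n)" for e x
  note forms = hankel_psd_exp_series_forms_nonneg[OF psd nonneg summable, folded F_def]
  have pos: "0 < F 0 x" for x
  proof -
    have "0 \<le> F 0 x" and "(F 0 0)\<^sup>2 \<le> F 0 x * F 0 (- x)"
      using nonneg_quadratic_form_coeffs[OF forms(1)[where y = "x / 2" and z = "- x / 2"]] by simp_all
    moreover have "F 0 0 = b 0" unfolding F_def using powser_zero[of "\<lambda>n. b n / fact n"] by simp
    ultimately show ?thesis using \<open>0 < b 0\<close> by (cases "F 0 x = 0") auto
  qed
  have F_eqs: "(\<Sum>n. b n / fact n * x ^ n) = F 0 x"
    "(\<Sum>n. diffs (\<lambda>n. b n / fact n) n * x ^ n) = F 1 x"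
    "(\<Sum>n. diffs (diffs (\<lambda>n. b n / fact n)) n * x ^ n) = F 2 x" for x
    by (simp_all add: F_def diffs_div_fact numeral_2_eq_2)
  have "convex_on UNIV (\<lambda>x. ln (\<Sum>n. b n / fact n * x ^ n))"
  proof (rule convex_on_ln_powser[OF summable])
    show "0 < (\<Sum>n. b n / fact n * x ^ n)" for x unfolding F_eqs by (rule pos)
    show "(\<Sum>n. diffs (\<lambda>n. b n / fact n) n * x ^ n)\<^sup>2
        \<le> (\<Sum>n. b n / fact n * x ^ n) * (\<Sum>n. diffs (diffs (\<lambda>n. b n / fact n)) n * x ^ n)" for x
      unfolding F_eqs by (rule nonneg_quadratic_form_coeffs(3)[OF forms(2)])
  qed simp
  with pos show ?thesis unfolding log_convex_on_def F_eqs by simp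
qed

section \<open>Gauss's multiplication formula\<close>

lemma pochhammer_mult_split:
  fixes z :: real
  assumes "m \<ge> 1"
  shows "pochhammer (real m * z) (m * n) = real m ^ (m * n) * (\<Prod>j<m. pochhammer (z + real j / real m) n)"
proof (induction n)
  case (Suc n)
  have "pochhammer (real m * z) (m * Suc n)
      = pochhammer (real m * z) (m * n) * pochhammer (real m * z + real (m * n)) m"
    by (simp only: mult_Suc_right add.commute[of m] pochhammer_product')
  also have "pochhammer (real m * z + real (m * n)) m = (\<Prod>j<m. real m * (z + real j / real m + real n))"
    unfolding pochhammer_prod atLeast0LessThan
    by (rule prod.cong[OF refl]) (use assms in \<open>simp add: field_simps\<close>)
  also have "\<dots> = real m ^ m * (\<Prod>j<m. z + real j / real m + real n)"
    by (simp add: prod.distrib)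
  also have "pochhammer (real m * z) (m * n) = real m ^ (m * n) * (\<Prod>j<m. pochhammer (z + real j / real m) n)"
    by (rule Suc.IH)
  finally have "pochhammer (real m * z) (m * Suc n) = real m ^ (m * n) * real m ^ m *
     ((\<Prod>j<m. pochhammer (z + real j / real m) n) * (\<Prod>j<m. z + real j / real m + real n))"
    by (simp add: mult_ac)
  also have "(\<Prod>j<m. pochhammer (z + real j / real m) n) * (\<Prod>j<m. z + real j / real m + real n)
      = (\<Prod>j<m. pochhammer (z + real j / real m) (Suc n))"
    by (simp add: pochhammer_rec' prod.distrib[symmetric] mult.commute)
  also have "real m ^ (m * n) * real m ^ m = real m ^ (m * Suc n)"
    by (simp add: power_add[symmetric] add.commute)
  finally show ?case .
qed simp

lemma Gamma_series'_mult:
  fixes z :: real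
  assumes "m \<ge> 1" "n \<ge> 1" "z > 0"
  shows "Gamma_series' (real m * z) (m * n) = exp (real m * z * ln (real m))
    * (fact (m * n - 1) / (real m ^ (m * n) * fact (n - 1) ^ m * exp (\<Sum>j<m. real j / real m * ln (real n))))
    * (\<Prod>j<m. Gamma_series' (z + real j / real m) n)"
proof -
  have pos: "real m > 0" "real n > 0" using assms by auto
  have lhs: "Gamma_series' (real m * z) (m * n) = fact (m * n - 1)
      * (exp (real m * z * ln (real m)) * exp (real m * z * ln (real n)))
      / (real m ^ (m * n) * (\<Prod>j<m. pochhammer (z + real j / real m) n))"
    unfolding Gamma_series'_def pochhammer_mult_split[OF assms(1)] using pos
    by (simp add: ln_mult exp_add[symmetric] algebra_simps)
  have "(\<Prod>j<m. Gamma_series' (z + real j / real m) n)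
      = fact (n - 1) ^ m * exp (\<Sum>j<m. (z + real j / real m) * ln (real n))
        / (\<Prod>j<m. pochhammer (z + real j / real m) n)"
    by (simp add: Gamma_series'_def prod_dividef prod.distrib exp_sum)
  also have "(\<Sum>j<m. (z + real j / real m) * ln (real n))
      = real m * z * ln (real n) + (\<Sum>j<m. real j / real m * ln (real n))"
    by (simp add: sum.distrib distrib_right)
  finally have rhs: "(\<Prod>j<m. Gamma_series' (z + real j / real m) n) = fact (n - 1) ^ m
      * (exp (real m * z * ln (real n)) * exp (\<Sum>j<m. real j / real m * ln (real n)))
      / (\<Prod>j<m. pochhammer (z + real j / real m) n)"
    by (simp add: exp_add)
  have "(\<Prod>j<m. pochhammer (z + real j / real m) n) > 0"
    using assms by (intro prod_pos pochhammer_pos) (simp add: add_pos_nonneg)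
  then show ?thesis unfolding lhs rhs using pos by (simp add: field_simps)
qed

lemma Gamma_mult_formula:
  assumes "m \<ge> 1"
  shows "\<exists>A>0. \<forall>z>0. Gamma (real m * z) = A * exp (real m * z * ln (real m)) * (\<Prod>j<m. Gamma (z + real j / real m))"
proof -
  define D where "D n = fact (m * n - 1)
    / (real m ^ (m * n) * fact (n - 1) ^ m * exp (\<Sum>j<m. real j / real m * ln (real n)))" for n
  define E where "E z = exp (real m * z * ln (real m))" for z :: real
  define P where "P z = (\<Prod>j<m. Gamma (z + real j / real m))" for z :: real
  define P' where "P' z n = (\<Prod>j<m. Gamma_series' (z + real j / real m) n)" for z :: real and n
  have series: "Gamma_series' (real m * z) (m * n) = E z * D n * P' z n" if "z > 0" "n \<ge> 1" for z n
    unfolding E_def D_def P'_def by (rule Gamma_series'_mult[OF assms that(2,1)])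
  have "strict_mono (\<lambda>n. m * n)" using assms by (intro strict_monoI) simp
  from LIMSEQ_subseq_LIMSEQ[OF Gamma_series'_LIMSEQ this]
  have lim: "(\<lambda>n. Gamma_series' (real m * z) (m * n)) \<longlonglongrightarrow> Gamma (real m * z)" for z
    by (simp add: o_def)
  have P'_lim: "P' z \<longlonglongrightarrow> P z" for z
    unfolding P'_def P_def by (intro tendsto_prod Gamma_series'_LIMSEQ)
  have P'_pos: "P' z n > 0" if "z > 0" "n \<ge> 1" for z n
    unfolding P'_def Gamma_series'_def using that
    by (intro prod_pos) (auto intro!: divide_pos_pos pochhammer_pos add_pos_nonneg)
  have P_pos: "P z > 0" if "z > 0" for z
    unfolding P_def using that by (intro prod_pos Gamma_real_pos) (auto intro: add_pos_nonneg)
  define A where "A = Gamma (real m) / (E 1 * P 1)"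
  have "(\<lambda>n. Gamma_series' (real m * 1) (m * n) / (E 1 * P' 1 n)) \<longlonglongrightarrow> A"
    unfolding A_def using P_pos[of 1] lim[of 1] by (intro tendsto_intros P'_lim) (auto simp: E_def)
  moreover have "eventually (\<lambda>n. Gamma_series' (real m * 1) (m * n) / (E 1 * P' 1 n) = D n) sequentially"
    using eventually_ge_at_top[of 1]
  proof eventually_elim
    case (elim n)
    then show ?case using series[of 1 n] P'_pos[of 1 n] by (simp add: E_def field_simps)
  qed
  ultimately have D_lim: "D \<longlonglongrightarrow> A" by (rule Lim_transform_eventually)
  have "Gamma (real m * z) = A * E z * P z" if "z > 0" for z
  proof -
    have "eventually (\<lambda>n. E z * D n * P' z n = Gamma_series' (real m * z) (m * n)) sequentially"
      using eventually_ge_at_top[of 1] by eventually_elim (use series that in simp)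
    then have "(\<lambda>n. Gamma_series' (real m * z) (m * n)) \<longlonglongrightarrow> E z * A * P z"
      by (rule Lim_transform_eventually[rotated]) (intro tendsto_intros D_lim P'_lim)
    from LIMSEQ_unique[OF lim this] show ?thesis by (simp add: mult_ac)
  qed
  moreover have "A > 0" unfolding A_def using P_pos[of 1] assms by (simp add: E_def)
  ultimately show ?thesis unfolding E_def P_def by blast
qed

section \<open>Rational \<open>\<alpha>\<close> below one\<close>

lemma powr_of_nat_div_mult:
  fixes t q c :: real
  assumes "t \<ge> 0" "q > 0"
  shows "(t powr (1 / q)) ^ k * t powr c = t powr (real k / q + c)"
proof (cases "t = 0")
  case False
  then show ?thesis
    using assms by (simp add: powr_realpow[symmetric] powr_powr powr_add)
qed simp

lemma moment_sequence_Gamma: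
  assumes "a > 0" "q > 0"
  shows "moment_sequence (\<lambda>k. Gamma (real k / q + a))"
  unfolding moment_sequence_def
proof (intro exI conjI ballI allI)
  fix k
  have "((\<lambda>t. t powr (real k / q + a - 1) / exp t) has_integral Gamma (real k / q + a)) {0..}"
    using assms by (intro Gamma_integral_real) (simp add: add_nonneg_pos)
  then show "((\<lambda>t. (t powr (1 / q)) ^ k * (t powr (a - 1) / exp t)) has_integral Gamma (real k / q + a)) {0..}"
    by (rule has_integral_eq[rotated])
       (use assms powr_of_nat_div_mult[of _ q k "a - 1"] in \<open>simp add: algebra_simps\<close>)
qed simp

lemma moment_sequence_Gamma_ratio:
  assumes "a > 0" "y > 0" "q > 0"
  shows "moment_sequence (\<lambda>k. Gamma (real k / q + a) / Gamma (real k / q + a + y))"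
  unfolding moment_sequence_def
proof (intro exI conjI ballI allI)
  fix k
  have x: "real k / q + a > 0" using assms by (simp add: add_nonneg_pos)
  have "((\<lambda>t. t powr (real k / q + a - 1) * (1 - t) powr (y - 1) / Gamma y)
      has_integral Beta (real k / q + a) y / Gamma y) {0..1}"
    by (intro has_integral_divide has_integral_Beta_real x assms)
  moreover have "Beta (real k / q + a) y / Gamma y = Gamma (real k / q + a) / Gamma (real k / q + a + y)"
  proof -
    have "Gamma y > 0" using assms by simp
    then show ?thesis by (simp add: Beta_def)
  qed
  ultimately have "((\<lambda>t. t powr (real k / q + a - 1) * (1 - t) powr (y - 1) / Gamma y)
      has_integral Gamma (real k / q + a) / Gamma (real k / q + a + y)) {0..1}"
    by simp
  then show "((\<lambda>t. (t powr (1 / q)) ^ k * (t powr (a - 1) * (1 - t) powr (y - 1) / Gamma y))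
      has_integral Gamma (real k / q + a) / Gamma (real k / q + a + y)) {0..1}"
    by (rule has_integral_eq[rotated])
       (use assms powr_of_nat_div_mult[of _ q k "a - 1"] in \<open>simp add: algebra_simps\<close>)
qed (use assms in simp)

text \<open>For \<open>\<alpha> = p / q\<close>, the multiplication formula for \<open>\<Gamma>(q \<cdot> (k+1)/q)\<close> and for
  \<open>\<Gamma>(p \<cdot> (k/q + 1/p))\<close> splits \<open>k! / \<Gamma>(\<alpha>k + 1)\<close> into a geometric factor and the
  \<open>q\<close> factors below; the first \<open>p\<close> of them are Gamma ratios, the others Gamma values.\<close>
definition gamma_beta_factor :: "nat \<Rightarrow> nat \<Rightarrow> nat \<Rightarrow> nat \<Rightarrow> real" where
  "gamma_beta_factor p q j k = Gamma (real k / real q + real (j + 1) / real q)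
     / (if j < p then Gamma (real k / real q + real (j + 1) / real p) else 1)"

lemma moment_sequence_gamma_beta_factor:
  assumes "p < q"
  shows "moment_sequence (gamma_beta_factor p q j)"
proof -
  define a where "a = real (j + 1) / real q"
  have a: "a > 0" using assms by (simp add: a_def)
  show ?thesis
  proof (cases "j < p")
    case True
    define y where "y = real (j + 1) / real p - a"
    have "real (j + 1) / real q < real (j + 1) / real p"
      using True assms by (intro divide_strict_left_mono) auto
    then have y: "y > 0" by (simp add: y_def a_def)
    have "gamma_beta_factor p q j = (\<lambda>k. Gamma (real k / real q + a) / Gamma (real k / real q + a + y))"
      by (rule ext) (simp add: gamma_beta_factor_def True a_def y_def)
    then show ?thesis using moment_sequence_Gamma_ratio[OF a y] assms by simp
  next
    case False
    have "gamma_beta_factor p q j = (\<lambda>k. Gamma (real k / real q + a))"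
      by (rule ext) (simp add: gamma_beta_factor_def False a_def)
    then show ?thesis using moment_sequence_Gamma[OF a] assms by simp
  qed
qed

lemma prod_gamma_beta_factor:
  assumes "p \<le> q"
  shows "(\<Prod>j<q. gamma_beta_factor p q j k)
    = (\<Prod>j<q. Gamma (real k / real q + real (j + 1) / real q))
      / (\<Prod>j<p. Gamma (real k / real q + real (j + 1) / real p))"
proof -
  have "(\<Prod>j<q. if j < p then Gamma (real k / real q + real (j + 1) / real p) else 1)
      = (\<Prod>j<p. Gamma (real k / real q + real (j + 1) / real p))"
    using assms by (intro prod.mono_neutral_cong_right) auto
  then show ?thesis by (simp add: gamma_beta_factor_def prod_dividef)
qed

lemma fact_div_Gamma_rational_eq:
  assumes "1 \<le> p" "p < q"
  shows "\<exists>K>0. \<exists>C>0. \<forall>k. fact k / Gamma (real p / real q * real k + 1)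
    = K * (C ^ k * (\<Prod>j<q. gamma_beta_factor p q j k))"
proof -
  have pos: "real p > 0" "real q > 0" using assms by auto
  obtain Aq where Aq: "Aq > 0" "\<And>z. z > 0 \<Longrightarrow> Gamma (real q * z)
      = Aq * exp (real q * z * ln (real q)) * (\<Prod>j<q. Gamma (z + real j / real q))"
    using Gamma_mult_formula[of q] assms by auto
  obtain Ap where Ap: "Ap > 0" "\<And>z. z > 0 \<Longrightarrow> Gamma (real p * z)
      = Ap * exp (real p * z * ln (real p)) * (\<Prod>j<p. Gamma (z + real j / real p))"
    using Gamma_mult_formula[of p] assms by auto
  define K where "K = Aq / Ap * exp (ln (real q) - ln (real p))"
  define C where "C = exp (ln (real q) - real p / real q * ln (real p))"
  have "fact k / Gamma (real p / real q * real k + 1) = K * (C ^ k * (\<Prod>j<q. gamma_beta_factor p q j k))" for k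
  proof -
    define G where "G = (\<Prod>j<q. Gamma (real k / real q + real (j + 1) / real q))"
    define H where "H = (\<Prod>j<p. Gamma (real k / real q + real (j + 1) / real p))"
    have z1: "(real k + 1) / real q > 0" and z2: "real k / real q + 1 / real p > 0"
      using pos by (simp_all add: add_nonneg_pos)
    have "Gamma (real k + 1) = fact k" using Gamma_fact[of k] by (simp add: add.commute)
    then have "fact k = Gamma (real q * ((real k + 1) / real q))" using pos by simp
    also have "\<dots> = Aq * exp ((real k + 1) * ln (real q)) * G"
      unfolding Aq(2)[OF z1] G_def using pos by (simp add: field_simps)
    finally have num: "fact k = Aq * exp ((real k + 1) * ln (real q)) * G" .
    have "real p / real q * real k + 1 = real p * (real k / real q + 1 / real p)"
      using pos by (simp add: field_simps)
    then have "Gamma (real p / real q * real k + 1) = Gamma (real p * (real k / real q + 1 / real p))"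
      by (simp only:)
    also have "\<dots> = Ap * exp ((real p / real q * real k + 1) * ln (real p)) * H"
      unfolding Ap(2)[OF z2] H_def using pos by (simp add: field_simps)
    finally have den: "Gamma (real p / real q * real k + 1)
        = Ap * exp ((real p / real q * real k + 1) * ln (real p)) * H" .
    have "(real k + 1) * ln (real q) - (real p / real q * real k + 1) * ln (real p)
        = (ln (real q) - ln (real p)) + real k * (ln (real q) - real p / real q * ln (real p))"
      by (simp add: algebra_simps)
    then have "exp ((real k + 1) * ln (real q)) / exp ((real p / real q * real k + 1) * ln (real p))
        = exp (ln (real q) - ln (real p)) * C ^ k"
      unfolding C_def by (simp add: exp_diff[symmetric] exp_add exp_of_nat_mult)
    moreover have "H > 0"
      unfolding H_def using pos by (intro prod_pos Gamma_real_pos) (simp add: add_nonneg_pos)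
    ultimately show ?thesis
      using Ap(1) assms unfolding num den prod_gamma_beta_factor[OF less_imp_le[OF assms(2)]]
      by (simp add: K_def G_def H_def field_simps)
  qed
  moreover have "K > 0" "C > 0" unfolding K_def C_def using Aq Ap by auto
  ultimately show ?thesis by blast
qed

lemma log_convex_on_mittag_leffler_rational:
  assumes "1 \<le> p" "p < q"
  shows "log_convex_on UNIV (mittag_leffler (real p / real q))"
proof -
  define \<alpha> where "\<alpha> = real p / real q"
  have \<alpha>: "\<alpha> > 0" using assms by (simp add: \<alpha>_def)
  obtain K C where "K > 0" "C > 0"
    and decomp: "\<And>k. fact k / Gamma (\<alpha> * real k + 1) = K * (C ^ k * (\<Prod>j<q. gamma_beta_factor p q j k))"
    using fact_div_Gamma_rational_eq[OF assms] unfolding \<alpha>_def by blast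
  have "hankel_psd (\<lambda>k. \<Prod>j<q. gamma_beta_factor p q j k)"
    using assms by (intro hankel_psd_prod_moment_sequences moment_sequence_gamma_beta_factor)
  then have "hankel_psd (\<lambda>k. fact k / Gamma (\<alpha> * real k + 1))"
    unfolding decomp using \<open>K > 0\<close> by (intro hankel_psd_cmult hankel_psd_mult_power) auto
  moreover have "fact k / Gamma (\<alpha> * real k + 1) / fact k = ml_coeff \<alpha> k" for k
    by (simp add: ml_coeff_def divide_inverse)
  ultimately have "log_convex_on UNIV (\<lambda>x. \<Sum>k. ml_coeff \<alpha> k * x ^ k)"
    using log_convex_on_exp_series[of "\<lambda>k. fact k / Gamma (\<alpha> * real k + 1)"] \<alpha>
      ml_coeff_pos[of \<alpha>] summable_ml_powser[OF \<alpha>]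
    by (simp add: ml_coeff_def less_imp_le)
  then show ?thesis unfolding \<alpha>_def[symmetric] mittag_leffler_powser[abs_def] .
qed

section \<open>Passing to the limit\<close>

lemma log_convex_on_UNIV_limit:
  fixes F :: "nat \<Rightarrow> real \<Rightarrow> real"
  assumes conv: "eventually (\<lambda>n. log_convex_on UNIV (F n)) sequentially"
    and lim: "\<And>x. (\<lambda>n. F n x) \<longlonglongrightarrow> f x" and "0 < f 0"
  shows "log_convex_on UNIV f"
proof -
  have pos: "0 < f x" for x
  proof -
    have "eventually (\<lambda>n. (F n 0)\<^sup>2 \<le> F n x * F n (- x) \<and> 0 \<le> F n x) sequentially"
      using conv
    proof eventually_elim
      case (elim n)
      then have pos: "0 < F n y" for y by (simp add: log_convex_on_def)
      have "ln (F n ((1 - 1/2) *\<^sub>R x + (1/2) *\<^sub>R - x)) \<le> (1 - 1/2) * ln (F n x) + (1/2) * ln (F n (- x))"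
        using elim unfolding log_convex_on_def by (intro convex_onD) auto
      then have "ln ((F n 0)\<^sup>2) \<le> ln (F n x * F n (- x))"
        using pos[of 0] pos[of x] pos[of "- x"] by (simp add: ln_mult ln_realpow)
      then have "(F n 0)\<^sup>2 \<le> F n x * F n (- x)"
        using pos[of 0] pos[of x] pos[of "- x"] by (subst (asm) ln_le_cancel_iff) auto
      then show ?case using pos[of x] by simp
    qed
    then have "(f 0)\<^sup>2 \<le> f x * f (- x)" "0 \<le> f x"
      by (auto intro: tendsto_le[OF _ tendsto_mult[OF lim lim] tendsto_power[OF lim]]
          tendsto_le[OF _ lim tendsto_const] elim: eventually_mono)
    then show ?thesis using \<open>0 < f 0\<close> by (cases "f x = 0") auto
  qed
  have "convex_on UNIV (\<lambda>x. ln (f x))"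
  proof (rule convex_onI)
    fix t x y :: real assume t: "0 < t" "t < 1"
    have ln_lim: "(\<lambda>n. ln (F n z)) \<longlonglongrightarrow> ln (f z)" for z
      using pos[of z] by (intro tendsto_ln lim) simp
    have "eventually (\<lambda>n. ln (F n ((1 - t) *\<^sub>R x + t *\<^sub>R y))
        \<le> (1 - t) * ln (F n x) + t * ln (F n y)) sequentially"
      using conv
    proof eventually_elim
      case (elim n)
      then show ?case using t unfolding log_convex_on_def by (intro convex_onD) auto
    qed
    then show "ln (f ((1 - t) *\<^sub>R x + t *\<^sub>R y)) \<le> (1 - t) * ln (f x) + t * ln (f y)"
      by (rule tendsto_le[rotated 3]) (auto intro!: tendsto_intros ln_lim)
  qed simp
  with pos show ?thesis by (simp add: log_convex_on_def)
qed

lemma rational_approximation_below_one: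
  assumes "0 < \<alpha>" "\<alpha> < 1"
  obtains p q :: "nat \<Rightarrow> nat" where "eventually (\<lambda>n. 1 \<le> p n \<and> p n < q n) sequentially"
    and "(\<lambda>n. real (p n) / real (q n)) \<longlonglongrightarrow> \<alpha>"
proof -
  define p where "p n = nat \<lfloor>\<alpha> * real (Suc n)\<rfloor>" for n
  have p: "\<alpha> * real (Suc n) - 1 < real (p n)" "real (p n) \<le> \<alpha> * real (Suc n)" for n
  proof -
    have "real (p n) = of_int \<lfloor>\<alpha> * real (Suc n)\<rfloor>" using assms by (simp add: p_def)
    then show "\<alpha> * real (Suc n) - 1 < real (p n)" "real (p n) \<le> \<alpha> * real (Suc n)" by linarith+
  qed
  have "eventually (\<lambda>n. 1 \<le> p n \<and> p n < Suc n) sequentially"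
    using eventually_ge_at_top[of "nat \<lceil>1 / \<alpha>\<rceil>"]
  proof eventually_elim
    case (elim n)
    then have "1 / \<alpha> \<le> real (Suc n)" by linarith
    then have "1 \<le> \<alpha> * real (Suc n)" using assms by (simp add: field_simps)
    moreover have "\<alpha> * real (Suc n) < real (Suc n)" using assms by simp
    ultimately show ?case unfolding p_def by linarith
  qed
  moreover have "(\<lambda>n. real (p n) / real (Suc n)) \<longlonglongrightarrow> \<alpha>"
  proof (rule tendsto_sandwich[OF _ _ _ tendsto_const])
    show "(\<lambda>n. \<alpha> - inverse (real (Suc n))) \<longlonglongrightarrow> \<alpha>"
      using tendsto_diff[OF tendsto_const LIMSEQ_inverse_real_of_nat, of \<alpha>] by simp
    have "\<alpha> - inverse (real (Suc n)) \<le> real (p n) / real (Suc n)" for n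
    proof -
      have "\<alpha> - inverse (real (Suc n)) = (\<alpha> * real (Suc n) - 1) / real (Suc n)"
        by (simp add: field_simps)
      also have "\<dots> \<le> real (p n) / real (Suc n)"
        using p(1)[of n] by (intro divide_right_mono) auto
      finally show ?thesis .
    qed
    then show "\<forall>\<^sub>F n in sequentially. \<alpha> - inverse (real (Suc n)) \<le> real (p n) / real (Suc n)"
      by simp
    show "\<forall>\<^sub>F n in sequentially. real (p n) / real (Suc n) \<le> \<alpha>"
      using p(2) by (simp add: divide_le_eq mult.commute)
  qed
  ultimately show ?thesis using that by blast
qed

lemma log_convex_on_mittag_leffler:
  assumes "0 < \<alpha>" "\<alpha> < 1"
  shows "log_convex_on UNIV (mittag_leffler \<alpha>)"
proof -
  obtain p q :: "nat \<Rightarrow> nat" where pq: "eventually (\<lambda>n. 1 \<le> p n \<and> p n < q n) sequentially"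
    and lim: "(\<lambda>n. real (p n) / real (q n)) \<longlonglongrightarrow> \<alpha>"
    using rational_approximation_below_one[OF assms] by blast
  show ?thesis
  proof (rule log_convex_on_UNIV_limit)
    show "eventually (\<lambda>n. log_convex_on UNIV (mittag_leffler (real (p n) / real (q n)))) sequentially"
      using pq by eventually_elim (auto intro: log_convex_on_mittag_leffler_rational)
  qed (use mittag_leffler_tendsto_alpha[OF assms(1) lim] in auto)
qed

theorem proposition2p3:
  fixes \<alpha> :: real
  shows "(0 < \<alpha> \<and> \<alpha> < 1 \<longrightarrow> log_convex_on UNIV (mittag_leffler \<alpha>))
       \<and> (\<alpha> > 1 \<longrightarrow> log_concave_on {0<..} (mittag_leffler \<alpha>))"
  using log_convex_on_mittag_leffler log_concave_on_mittag_leffler by blast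

end
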